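(* Let $A>0$ and let $\mathcal S$ be a Sawtooth model with $n\ge1$ upper particles such that $\int_0^1f_1=1$ and $\|f_1\|_\infty\le A$. Then for every $x_2\in[0,1)$ and every $x\in[0,1]$, $d_{X_I\mid X_2=x_2}(x)\le 4A^2$. Consequently, for every event $\mathcal X$ of positive probability in the $\sigma$-algebra generated by $\{X_i,Y_i\}_{i\ge2}$, one has $\|d_{X_I\mid\mathcal X}\|_\infty\le K_A:=4A^2$.
   Context: A (type $--$) Sawtooth model with $n\ge1$ upper particles is specified by functions $f_1,g_1,\dots,f_n,g_n:[0,1]\to[0,\infty)$, each nondecreasing, $C^1$ and not identically zero. It is the probability space $[0,1]^{n+1}\times[0,1]^n$ with probability density at $(x_1,\dots,x_{n+1},y_1,\dots,y_n)$ equal to $\frac{1}{\mathcal V}\prod_{i=1}^n\mathbf 1_{\{x_i\le y_i\}}\mathbf 1_{\{x_{i+1}\le y_i\}}f_i(y_i-x_i)\,g_i(y_i-x_{i+1})$, $\mathcal V$ being the normalizing constant; lower particles $X_1,\dots,X_{n+1}$, upper particles $Y_1,\dots,Y_n$, $X_I:=X_1$. Conditional densities are computed from the joint density. *)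

theory Defs
  imports "HOL-Probability.Probability"
begin

text \<open>Sawtooth model (type --). Lower particles are indexed 1..n+1, upper particles 1..n;
  a configuration is a pair (x, y) of functions nat => real (extensional on these index sets).\<close>

definition unit_int :: "real measure" where
  "unit_int = restrict_space lborel {0..1}"

definition C1_on :: "(real \<Rightarrow> real) \<Rightarrow> real set \<Rightarrow> bool" where
  "C1_on h S \<longleftrightarrow> (\<exists>D. continuous_on S D \<and> (\<forall>t\<in>S. (h has_real_derivative D t) (at t within S)))"

definition sawtooth_model :: "nat \<Rightarrow> (nat \<Rightarrow> real \<Rightarrow> real) \<Rightarrow> (nat \<Rightarrow> real \<Rightarrow> real) \<Rightarrow> bool" where
  "sawtooth_model n f g \<longleftrightarrow> n \<ge> 1 \<and>
     (\<forall>i\<in>{1..n}. (\<forall>t\<in>{0..1}. f i t \<ge> 0 \<and> g i t \<ge> 0)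
        \<and> mono_on {0..1} (f i) \<and> mono_on {0..1} (g i)
        \<and> C1_on (f i) {0..1} \<and> C1_on (g i) {0..1}
        \<and> (\<exists>t\<in>{0..1}. f i t \<noteq> 0) \<and> (\<exists>t\<in>{0..1}. g i t \<noteq> 0))"

text \<open>Unnormalised joint density (the normalising constant V is omitted).\<close>
definition saw_weight :: "nat \<Rightarrow> (nat \<Rightarrow> real \<Rightarrow> real) \<Rightarrow> (nat \<Rightarrow> real \<Rightarrow> real)
    \<Rightarrow> (nat \<Rightarrow> real) \<Rightarrow> (nat \<Rightarrow> real) \<Rightarrow> real" where
  "saw_weight n f g x y = (\<Prod>i\<in>{1..n}.
      (if x i \<le> y i \<and> x (Suc i) \<le> y i then f i (y i - x i) * g i (y i - x (Suc i)) else 0))"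

definition saw_base :: "nat \<Rightarrow> ((nat \<Rightarrow> real) \<times> (nat \<Rightarrow> real)) measure" where
  "saw_base n = PiM {1..n+1} (\<lambda>_. unit_int) \<Otimes>\<^sub>M PiM {1..n} (\<lambda>_. unit_int)"

definition saw_V :: "nat \<Rightarrow> (nat \<Rightarrow> real \<Rightarrow> real) \<Rightarrow> (nat \<Rightarrow> real \<Rightarrow> real) \<Rightarrow> real" where
  "saw_V n f g = (\<integral>z. saw_weight n f g (fst z) (snd z) \<partial>saw_base n)"

definition saw_prob :: "nat \<Rightarrow> (nat \<Rightarrow> real \<Rightarrow> real) \<Rightarrow> (nat \<Rightarrow> real \<Rightarrow> real)
    \<Rightarrow> ((nat \<Rightarrow> real) \<times> (nat \<Rightarrow> real)) measure" where
  "saw_prob n f g = density (saw_base n)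
      (\<lambda>z. ennreal (saw_weight n f g (fst z) (snd z) / saw_V n f g))"

definition marg_X1_X2 :: "nat \<Rightarrow> (nat \<Rightarrow> real \<Rightarrow> real) \<Rightarrow> (nat \<Rightarrow> real \<Rightarrow> real) \<Rightarrow> real \<Rightarrow> real \<Rightarrow> real" where
  "marg_X1_X2 n f g x x2 =
     (\<integral>z. saw_weight n f g (\<lambda>i. if i = 1 then x else if i = 2 then x2 else fst z i) (snd z)
        \<partial>(PiM {3..n+1} (\<lambda>_. unit_int) \<Otimes>\<^sub>M PiM {1..n} (\<lambda>_. unit_int)))"

text \<open>Conditional density of X_I = X_1 given X_2 = x2, evaluated at x.\<close>
definition cond_dens_X1_given_X2 :: "nat \<Rightarrow> (nat \<Rightarrow> real \<Rightarrow> real) \<Rightarrow> (nat \<Rightarrow> real \<Rightarrow> real) \<Rightarrow> real \<Rightarrow> real \<Rightarrow> real" where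
  "cond_dens_X1_given_X2 n f g x2 x =
     marg_X1_X2 n f g x x2 / (\<integral>t\<in>{0..1}. marg_X1_X2 n f g t x2 \<partial>lborel)"

text \<open>Events in the sigma-algebra generated by X_2..X_{n+1}, Y_2..Y_n.\<close>
definition tail_event :: "nat \<Rightarrow> ((nat \<Rightarrow> real) \<times> (nat \<Rightarrow> real)) set \<Rightarrow> bool" where
  "tail_event n E \<longleftrightarrow> (\<exists>B \<in> sets (PiM {2..n+1} (\<lambda>_. unit_int) \<Otimes>\<^sub>M PiM {2..n} (\<lambda>_. unit_int)).
      E = {z \<in> space (saw_base n). (restrict (fst z) {2..n+1}, restrict (snd z) {2..n}) \<in> B})"

definition cond_dens_X1_given_event :: "nat \<Rightarrow> (nat \<Rightarrow> real \<Rightarrow> real) \<Rightarrow> (nat \<Rightarrow> real \<Rightarrow> real)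
    \<Rightarrow> ((nat \<Rightarrow> real) \<times> (nat \<Rightarrow> real)) set \<Rightarrow> real \<Rightarrow> real" where
  "cond_dens_X1_given_event n f g E x =
     (\<integral>z. saw_weight n f g ((fst z)(1 := x)) (snd z) * indicator E ((fst z)(1 := x), snd z)
        \<partial>(PiM {2..n+1} (\<lambda>_. unit_int) \<Otimes>\<^sub>M PiM {1..n} (\<lambda>_. unit_int)))
     / (\<integral>z. saw_weight n f g (fst z) (snd z) * indicator E z \<partial>saw_base n)"

end

theory Submission
  imports Defs
begin

text \<open>Integrating out the upper particle Y_1 factorises the weight of a configuration as
  Phi(X_1) times a function of the remaining particles, where, for X_2 = x2,
  Phi(t) = int_0^1 [t <= y, x2 <= y] f_1(y - t) g_1(y - x2) dy.
  Hence, conditionally on anything measurable with respect to X_2, ..., Y_n, the density of X_1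
  is a mixture of normalised copies of Phi, and it suffices to show Phi(x) <= 4 A^2 int_0^1 Phi.
  Bounding f_1 by A gives Phi(x) <= A int_x2^1 g_1(y - x2) dy. Conversely, by Tonelli
  int_0^1 Phi = int g_1(y - x2) (int_0^y f_1) dy, and int_0^y f_1 >= 1/2 once y >= 1 - 1/(2A);
  since g_1 is nondecreasing, the part of int_x2^1 g_1(y - x2) dy over y >= 1 - 1/(2A) is at
  least the fraction 1/(2A) of the whole.\<close>

lemma bound_ge_one_of_unit_mass:
  fixes F :: "real \<Rightarrow> real"
  assumes FA: "\<And>t. F t \<le> A"
    and mass: "(\<integral>\<^sup>+ s. ennreal (F s) * indicator {0..1} s \<partial>lborel) = 1"
  shows "1 \<le> A"
proof -
  have "ennreal 1 = (\<integral>\<^sup>+ s. ennreal (F s) * indicator {0..1} s \<partial>lborel)" using mass by simp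
  also have "\<dots> \<le> (\<integral>\<^sup>+ s. ennreal A * indicator {0..1::real} s \<partial>lborel)"
    by (intro nn_integral_mono) (auto simp: indicator_def FA ennreal_leI)
  also have "\<dots> = ennreal A" by (simp add: nn_integral_cmult_indicator)
  finally show ?thesis by (cases "0 \<le> A") (auto simp: ennreal_le_iff)
qed

lemma nn_integral_initial_segment_ge_half:
  fixes F :: "real \<Rightarrow> real"
  assumes [measurable]: "F \<in> borel_measurable borel"
    and FA: "\<And>t. F t \<le> A" and A: "A > 0"
    and mass: "(\<integral>\<^sup>+ s. ennreal (F s) * indicator {0..1} s \<partial>lborel) = 1"
    and y: "1 - 1/(2*A) \<le> y" "y \<le> 1"
  shows "ennreal (1/2) \<le> (\<integral>\<^sup>+ s. ennreal (F s) * indicator {0..y} s \<partial>lborel)"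
proof -
  define S where "S = (\<integral>\<^sup>+ s. ennreal (F s) * indicator {0..y} s \<partial>lborel)"
  have "(1::ennreal) \<le> (\<integral>\<^sup>+ s. ennreal (F s) * indicator {0..y} s + ennreal A * indicator {y<..1} s \<partial>lborel)"
    unfolding mass[symmetric]
    by (intro nn_integral_mono) (auto simp: indicator_def FA ennreal_leI)
  also have "\<dots> = S + ennreal A * ennreal (1 - y)"
    using y by (simp add: nn_integral_add nn_integral_cmult_indicator S_def)
  also have "ennreal A * ennreal (1 - y) = ennreal (A * (1 - y))"
    using A y by (simp add: ennreal_mult)
  finally have 1: "1 \<le> S + ennreal (A * (1 - y))" .
  have "A * (1 - y) \<le> A * (1/(2*A))" using A y by (intro mult_left_mono) auto
  then have "ennreal (A * (1 - y)) \<le> ennreal (1/2)" using A by (intro ennreal_leI) simp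
  with 1 have 2: "1 \<le> S + ennreal (1/2)" by (meson add_left_mono order_trans)
  show ?thesis
  proof (cases "S = \<top>")
    case False
    then obtain s where s: "S = ennreal s" "s \<ge> 0" by (cases S) auto
    have "ennreal 1 \<le> ennreal (s + 1/2)" using 2 s by (subst ennreal_plus) auto
    then have "1 \<le> s + 1/2" using s by (subst (asm) ennreal_le_iff) auto
    then show ?thesis unfolding S_def[symmetric] s by (intro ennreal_leI) simp
  qed (simp add: S_def)
qed

text \<open>Shrinking [a, 1] affinely onto [max a (1 - c), 1] only moves points to the right,
  where the monotone integrand is larger.\<close>
lemma mono_tail_integral_ge:
  fixes G :: "real \<Rightarrow> real"
  assumes mG: "mono G" and c: "0 < c" "c \<le> 1" and a: "0 \<le> a"
  shows "ennreal c * (\<integral>\<^sup>+ y. ennreal (G (y - a)) * indicator {a..1} y \<partial>lborel)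
    \<le> (\<integral>\<^sup>+ y. ennreal (G (y - a)) * indicator {max a (1 - c)..1} y \<partial>lborel)"
proof -
  have [measurable]: "G \<in> borel_measurable borel" using mG by (rule borel_measurable_mono)
  define L where "L = max a (1 - c)"
  have "(\<integral>\<^sup>+ y. ennreal (G (y - a)) * indicator {L..1} y \<partial>lborel)
      = ennreal c * (\<integral>\<^sup>+ u. ennreal (G ((1 - c) + c * u - a)) * indicator {L..1} ((1 - c) + c * u) \<partial>lborel)"
    using c by (subst nn_integral_real_affine[where c=c and t="1-c"]) auto
  moreover have "(\<integral>\<^sup>+ y. ennreal (G (y - a)) * indicator {a..1} y \<partial>lborel)
      \<le> (\<integral>\<^sup>+ u. ennreal (G ((1 - c) + c * u - a)) * indicator {L..1} ((1 - c) + c * u) \<partial>lborel)"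
  proof (intro nn_integral_mono)
    fix u
    show "ennreal (G (u - a)) * indicator {a..1} u
      \<le> ennreal (G ((1 - c) + c * u - a)) * indicator {L..1} ((1 - c) + c * u)"
    proof (cases "u \<in> {a..1}")
      case True
      then have u: "a \<le> u" "u \<le> 1" by auto
      have "(1 - c) * u \<le> (1 - c) * 1" using c u by (intro mult_left_mono) auto
      then have le: "u \<le> (1 - c) + c * u" by (simp add: algebra_simps)
      have "c * u \<le> c" "0 \<le> c * u" using c u a by (auto simp: mult_left_le)
      then have "(1 - c) + c * u \<in> {L..1}" using le u by (auto simp: L_def)
      moreover have "G (u - a) \<le> G ((1 - c) + c * u - a)" using le by (intro monoD[OF mG]) simp
      ultimately show ?thesis using True by (auto simp: ennreal_leI)
    qed auto
  qed
  ultimately show ?thesis using c by (simp add: mult_left_mono L_def)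
qed

text \<open>Phi of the proof idea: the weight left after integrating out Y_1, as a function of
  X_1 = t when X_2 = x2.\<close>
definition cell_integral :: "(real \<Rightarrow> real) \<Rightarrow> (real \<Rightarrow> real) \<Rightarrow> real \<Rightarrow> real \<Rightarrow> ennreal" where
  "cell_integral F G x2 t = (\<integral>\<^sup>+ y. ennreal (if t \<le> y \<and> x2 \<le> y then F (y - t) * G (y - x2) else 0)
      * indicator {0..1} y \<partial>lborel)"

lemma borel_measurable_cell_integral[measurable]:
  assumes [measurable]: "F \<in> borel_measurable borel" "G \<in> borel_measurable borel"
  shows "cell_integral F G x2 \<in> borel_measurable borel"
proof -
  have "cell_integral F G x2 \<in> borel_measurable lborel"
    unfolding cell_integral_def by (rule lborel.borel_measurable_nn_integral) measurable
  then show ?thesis by simp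
qed

lemma cell_integral_le:
  fixes F G :: "real \<Rightarrow> real"
  assumes mG: "mono G" and G0: "\<And>t. G t \<ge> 0" and FA: "\<And>t. F t \<le> A" and A: "A \<ge> 0"
    and x2: "0 \<le> x2"
  shows "cell_integral F G x2 t \<le> ennreal (A * G 1)"
proof -
  have "cell_integral F G x2 t \<le> (\<integral>\<^sup>+ y. ennreal (A * G 1) * indicator {0..1::real} y \<partial>lborel)"
    unfolding cell_integral_def
  proof (intro nn_integral_mono)
    fix y :: real
    show "ennreal (if t \<le> y \<and> x2 \<le> y then F (y - t) * G (y - x2) else 0) * indicator {0..1} y
      \<le> ennreal (A * G 1) * indicator {0..1} y"
    proof (cases "y \<in> {0..1}")
      case True
      have "G (y - x2) \<le> G 1" using True x2 by (intro monoD[OF mG]) auto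
      then have "F (y - t) * G (y - x2) \<le> A * G 1"
        using FA[of "y - t"] G0[of "y - x2"] A by (meson mult_mono order_trans mult_right_mono)
      then show ?thesis using True G0[of 1] A by (auto intro!: ennreal_leI)
    qed auto
  qed
  also have "\<dots> = ennreal (A * G 1)" by (simp add: nn_integral_cmult_indicator)
  finally show ?thesis .
qed

lemma cell_integral_le_tail:
  fixes F G :: "real \<Rightarrow> real"
  assumes [measurable]: "G \<in> borel_measurable borel"
    and G0: "\<And>t. G t \<ge> 0" and FA: "\<And>t. F t \<le> A" and A: "0 \<le> A"
  shows "cell_integral F G x2 x \<le> ennreal A * (\<integral>\<^sup>+ y. ennreal (G (y - x2)) * indicator {x2..1} y \<partial>lborel)"
proof -
  have "cell_integral F G x2 x \<le> (\<integral>\<^sup>+ y. ennreal A * (ennreal (G (y - x2)) * indicator {x2..1} y) \<partial>lborel)"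
    unfolding cell_integral_def
  proof (intro nn_integral_mono)
    fix y
    show "ennreal (if x \<le> y \<and> x2 \<le> y then F (y - x) * G (y - x2) else 0) * indicator {0..1} y
        \<le> ennreal A * (ennreal (G (y - x2)) * indicator {x2..1} y)"
    proof (cases "x \<le> y \<and> x2 \<le> y \<and> y \<le> 1")
      case True
      have "F (y - x) * G (y - x2) \<le> A * G (y - x2)" by (intro mult_right_mono FA G0)
      then have "ennreal (F (y - x) * G (y - x2)) \<le> ennreal A * ennreal (G (y - x2))"
        using A G0 by (simp add: ennreal_mult[symmetric] ennreal_leI)
      then show ?thesis using True by (auto simp: indicator_def)
    qed (auto simp: indicator_def)
  qed
  also have "\<dots> = ennreal A * (\<integral>\<^sup>+ y. ennreal (G (y - x2)) * indicator {x2..1} y \<partial>lborel)"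
    by (rule nn_integral_cmult) measurable
  finally show ?thesis .
qed

lemma cell_integral_total_ge:
  fixes F G :: "real \<Rightarrow> real"
  assumes [measurable]: "F \<in> borel_measurable borel" "G \<in> borel_measurable borel"
    and F0: "\<And>t. F t \<ge> 0" and G0: "\<And>t. G t \<ge> 0" and FA: "\<And>t. F t \<le> A" and A: "A > 0"
    and mass: "(\<integral>\<^sup>+ s. ennreal (F s) * indicator {0..1} s \<partial>lborel) = 1"
    and x2: "0 \<le> x2"
  shows "ennreal (1/2) * (\<integral>\<^sup>+ y. ennreal (G (y - x2)) * indicator {max x2 (1 - 1/(2*A))..1} y \<partial>lborel)
    \<le> (\<integral>\<^sup>+ t. cell_integral F G x2 t * indicator {0..1} t \<partial>lborel)"
proof -
  define L where "L = max x2 (1 - 1/(2*A))"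
  define W where "W = (\<lambda>t y. ennreal (if t \<le> y \<and> x2 \<le> y then F (y - t) * G (y - x2) else 0)
    * indicator {0..1} y * indicator {0..1} t)"
  have [measurable]: "(\<lambda>(t, y). W t y) \<in> borel_measurable (lborel \<Otimes>\<^sub>M lborel)"
    unfolding W_def by measurable
  have "(\<integral>\<^sup>+ t. cell_integral F G x2 t * indicator {0..1} t \<partial>lborel) = (\<integral>\<^sup>+ t. \<integral>\<^sup>+ y. W t y \<partial>lborel \<partial>lborel)"
    unfolding cell_integral_def W_def
    by (intro nn_integral_cong, rule nn_integral_multc[symmetric]) measurable
  also have "\<dots> = (\<integral>\<^sup>+ y. \<integral>\<^sup>+ t. W t y \<partial>lborel \<partial>lborel)"
    by (rule lborel_pair.Fubini'[symmetric]) measurable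
  finally have Fubini: "(\<integral>\<^sup>+ t. cell_integral F G x2 t * indicator {0..1} t \<partial>lborel)
    = (\<integral>\<^sup>+ y. \<integral>\<^sup>+ t. W t y \<partial>lborel \<partial>lborel)" .
  have "(\<integral>\<^sup>+ y. ennreal (1/2) * (ennreal (G (y - x2)) * indicator {L..1} y) \<partial>lborel)
    \<le> (\<integral>\<^sup>+ y. \<integral>\<^sup>+ t. W t y \<partial>lborel \<partial>lborel)"
  proof (intro nn_integral_mono)
    fix y
    show "ennreal (1/2) * (ennreal (G (y - x2)) * indicator {L..1} y) \<le> (\<integral>\<^sup>+ t. W t y \<partial>lborel)"
    proof (cases "y \<in> {L..1}")
      case True
      then have y: "x2 \<le> y" "1 - 1/(2*A) \<le> y" "y \<le> 1" by (auto simp: L_def)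
      have "(\<integral>\<^sup>+ t. W t y \<partial>lborel)
          = (\<integral>\<^sup>+ t. ennreal (G (y - x2)) * (ennreal (F (y - t)) * indicator {0..y} t) \<partial>lborel)"
        unfolding W_def using y x2
        by (intro nn_integral_cong) (auto simp: indicator_def ennreal_mult F0 G0 mult.commute)
      also have "\<dots> = ennreal (G (y - x2)) * (\<integral>\<^sup>+ t. ennreal (F (y - t)) * indicator {0..y} t \<partial>lborel)"
        by (rule nn_integral_cmult) measurable
      also have "(\<integral>\<^sup>+ t. ennreal (F (y - t)) * indicator {0..y} t \<partial>lborel)
          = (\<integral>\<^sup>+ s. ennreal (F s) * indicator {0..y} s \<partial>lborel)"
        by (subst nn_integral_real_affine[where c="-1" and t=y])
          (auto intro!: nn_integral_cong simp: indicator_def)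
      finally have eq: "(\<integral>\<^sup>+ t. W t y \<partial>lborel)
        = ennreal (G (y - x2)) * (\<integral>\<^sup>+ s. ennreal (F s) * indicator {0..y} s \<partial>lborel)" .
      have "ennreal (1/2) \<le> (\<integral>\<^sup>+ s. ennreal (F s) * indicator {0..y} s \<partial>lborel)"
        by (rule nn_integral_initial_segment_ge_half[OF _ FA A mass y(2,3)]) measurable
      then have "ennreal (1/2) * ennreal (G (y - x2))
          \<le> (\<integral>\<^sup>+ s. ennreal (F s) * indicator {0..y} s \<partial>lborel) * ennreal (G (y - x2))"
        by (rule mult_right_mono) simp
      then show ?thesis unfolding eq using True by (simp add: mult.commute)
    qed auto
  qed
  also have "(\<integral>\<^sup>+ y. ennreal (1/2) * (ennreal (G (y - x2)) * indicator {L..1} y) \<partial>lborel)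
    = ennreal (1/2) * (\<integral>\<^sup>+ y. ennreal (G (y - x2)) * indicator {L..1} y \<partial>lborel)"
    by (rule nn_integral_cmult) measurable
  finally show ?thesis using Fubini by (simp add: L_def)
qed

text \<open>4 A^2 = A * 2 * 2A: the sup of F, the half mass of F near 1, and the shrinking of
  the range of G.\<close>
lemma cell_integral_le_total:
  fixes F G :: "real \<Rightarrow> real"
  assumes mF: "mono F" and mG: "mono G" and F0: "\<And>t. F t \<ge> 0" and G0: "\<And>t. G t \<ge> 0"
    and FA: "\<And>t. F t \<le> A" and A: "A > 0"
    and mass: "(\<integral>\<^sup>+ s. ennreal (F s) * indicator {0..1} s \<partial>lborel) = 1"
    and x2: "0 \<le> x2"
  shows "cell_integral F G x2 x \<le> ennreal (4*A^2) * (\<integral>\<^sup>+ t. cell_integral F G x2 t * indicator {0..1} t \<partial>lborel)"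
proof -
  have [measurable]: "F \<in> borel_measurable borel" "G \<in> borel_measurable borel"
    using borel_measurable_mono mF mG by auto
  define c where "c = 1/(2*A)"
  have "1 \<le> A" by (rule bound_ge_one_of_unit_mass[OF FA mass])
  then have c: "0 < c" "c \<le> 1" by (auto simp: c_def field_simps)
  define Gint where "Gint = (\<integral>\<^sup>+ y. ennreal (G (y - x2)) * indicator {x2..1} y \<partial>lborel)"
  define H where "H = (\<integral>\<^sup>+ y. ennreal (G (y - x2)) * indicator {max x2 (1 - c)..1} y \<partial>lborel)"
  have "ennreal A = ennreal (4*A^2 * (1/2) * c)"
    using A by (simp add: c_def field_simps power2_eq_square)
  also have "\<dots> = ennreal (4*A^2 * (1/2)) * ennreal c"
    using c by (intro ennreal_mult) auto
  also have "ennreal (4*A^2 * (1/2)) = ennreal (4*A^2) * ennreal (1/2)"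
    by (intro ennreal_mult) auto
  moreover have "cell_integral F G x2 x \<le> ennreal A * Gint"
    unfolding Gint_def by (rule cell_integral_le_tail) (use G0 FA A in auto)
  ultimately have "cell_integral F G x2 x \<le> ennreal (4*A^2) * (ennreal (1/2) * (ennreal c * Gint))"
    by (simp add: mult.assoc)
  also have "\<dots> \<le> ennreal (4*A^2) * (ennreal (1/2) * H)"
    unfolding Gint_def H_def by (intro mult_left_mono mono_tail_integral_ge mG c x2) auto
  also have "\<dots> \<le> ennreal (4*A^2) * (\<integral>\<^sup>+ t. cell_integral F G x2 t * indicator {0..1} t \<partial>lborel)"
    unfolding H_def c_def by (intro mult_left_mono cell_integral_total_ge F0 G0 FA A mass x2) auto
  finally show ?thesis .
qed

lemma space_unit_int[simp]: "space unit_int = {0..1}"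
  by (simp add: unit_int_def space_restrict_space)

lemma prob_space_unit_int: "prob_space unit_int"
  unfolding unit_int_def
  by (rule prob_spaceI) (simp add: space_restrict_space emeasure_restrict_space)

lemma sigma_finite_unit_int: "sigma_finite_measure unit_int"
  using prob_space_unit_int by (rule prob_space_imp_sigma_finite)

lemma product_sigma_finite_unit_int: "product_sigma_finite (\<lambda>_::nat. unit_int)"
proof -
  interpret product_prob_space "\<lambda>_::nat. unit_int"
    by (simp add: product_prob_spaceI prob_space_unit_int)
  show ?thesis by unfold_locales
qed

lemma sigma_finite_PiM_unit_int: "sigma_finite_measure (PiM I (\<lambda>_::nat. unit_int))"
  by (simp add: prob_space_PiM prob_space_unit_int prob_space_imp_sigma_finite)

lemma nn_integral_unit_int:
  "(\<integral>\<^sup>+ y. h y \<partial>unit_int) = (\<integral>\<^sup>+ y. h y * indicator {0..1} y \<partial>lborel)"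
  unfolding unit_int_def by (rule nn_integral_restrict_space) simp

lemma measurable_unit_int_borel: "(\<lambda>x. x) \<in> measurable unit_int borel"
  unfolding unit_int_def by (rule measurable_restrict_space1) simp

lemma measurable_unit_int_imp_borel: "h \<in> measurable M unit_int \<Longrightarrow> h \<in> borel_measurable M"
  using measurable_compose[OF _ measurable_unit_int_borel] by blast

lemma measurable_unit_int_range: "h \<in> measurable M unit_int \<Longrightarrow> a \<in> space M \<Longrightarrow> h a \<in> {0..1}"
  using measurable_space[of h M unit_int a] by simp

definition ext01 :: "(real \<Rightarrow> real) \<Rightarrow> real \<Rightarrow> real" where
  "ext01 h t = h (max 0 (min 1 t))"

lemma ext01_eq: "t \<in> {0..1} \<Longrightarrow> ext01 h t = h t"
  by (simp add: ext01_def)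

lemma ext01_in_image: "ext01 h t \<in> h ` {0..1}"
  by (auto simp: ext01_def)

lemma mono_ext01: "mono_on {0..1} h \<Longrightarrow> mono (ext01 h)"
  by (auto intro!: monoI mono_onD[of "{0..1}" h] simp: ext01_def)

lemma borel_measurable_ext01: "mono_on {0..1} h \<Longrightarrow> ext01 h \<in> borel_measurable borel"
  by (rule borel_measurable_mono[OF mono_ext01])

lemma nn_integral_ext01:
  assumes mono: "mono_on {0..1} h" and nonneg: "\<forall>t\<in>{0..1}. 0 \<le> h t"
  shows "(\<integral>\<^sup>+ s. ennreal (ext01 h s) * indicator {0..1} s \<partial>lborel) = ennreal (\<integral>t\<in>{0..1}. h t \<partial>lborel)"
proof -
  have [measurable]: "ext01 h \<in> borel_measurable borel" by (rule borel_measurable_ext01[OF mono])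
  have h0: "0 \<le> ext01 h t" for t using ext01_in_image[of h t] nonneg by auto
  have "ext01 h t \<le> h 1" for t
    using ext01_in_image[of h t] by (auto intro!: mono_onD[OF mono])
  then have "(\<integral>\<^sup>+ s. ennreal (ext01 h s) * indicator {0..1} s \<partial>lborel)
      \<le> (\<integral>\<^sup>+ s. ennreal (h 1) * indicator {0..1::real} s \<partial>lborel)"
    by (intro nn_integral_mono) (auto simp: indicator_def ennreal_leI)
  also have "\<dots> < \<top>" by (simp add: nn_integral_cmult_indicator)
  finally have finite: "(\<integral>\<^sup>+ s. ennreal (ext01 h s) * indicator {0..1} s \<partial>lborel) < \<top>" .
  have "(\<integral>t\<in>{0..1}. h t \<partial>lborel) = (\<integral>t. indicator {0..1} t * ext01 h t \<partial>lborel)"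
    unfolding set_lebesgue_integral_def
    by (intro Bochner_Integration.integral_cong) (auto simp: indicator_def ext01_eq)
  also have "\<dots> = enn2real (\<integral>\<^sup>+ t. ennreal (indicator {0..1} t * ext01 h t) \<partial>lborel)"
    by (rule integral_eq_nn_integral) (use h0 in auto)
  also have "(\<integral>\<^sup>+ t. ennreal (indicator {0..1} t * ext01 h t) \<partial>lborel)
      = (\<integral>\<^sup>+ s. ennreal (ext01 h s) * indicator {0..1} s \<partial>lborel)"
    by (intro nn_integral_cong) (auto simp: indicator_def)
  finally show ?thesis using finite by (simp add: ennreal_enn2real)
qed

definition saw_factor :: "(nat \<Rightarrow> real \<Rightarrow> real) \<Rightarrow> (nat \<Rightarrow> real \<Rightarrow> real) \<Rightarrow> nat
    \<Rightarrow> (nat \<Rightarrow> real) \<Rightarrow> (nat \<Rightarrow> real) \<Rightarrow> real" where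
  "saw_factor f g i x y =
     (if x i \<le> y i \<and> x (Suc i) \<le> y i then f i (y i - x i) * g i (y i - x (Suc i)) else 0)"

lemma saw_weight_eq_prod: "saw_weight n f g x y = (\<Prod>i\<in>{1..n}. saw_factor f g i x y)"
  by (simp add: saw_weight_def saw_factor_def)

lemma saw_weight_split_first:
  "1 \<le> n \<Longrightarrow> saw_weight n f g x y = saw_factor f g 1 x y * (\<Prod>i\<in>{2..n}. saw_factor f g i x y)"
proof -
  assume "1 \<le> n"
  then have split: "{1..n} = insert 1 {2..n}" by auto
  show ?thesis unfolding saw_weight_eq_prod split by (subst prod.insert) auto
qed

lemma prod_saw_factor_cong:
  "(\<And>i. 2 \<le> i \<Longrightarrow> x i = x' i) \<Longrightarrow> (\<And>i. 2 \<le> i \<Longrightarrow> y i = y' i) \<Longrightarrow>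
   (\<Prod>i\<in>{2..n}. saw_factor f g i x y) = (\<Prod>i\<in>{2..n}. saw_factor f g i x' y')"
  by (intro prod.cong) (auto simp: saw_factor_def)

lemma saw_factor_eq_ext01:
  assumes "x i \<in> {0..1}" "x (Suc i) \<in> {0..1}" "y i \<in> {0..1}"
  shows "saw_factor f g i x y = (if x i \<le> y i \<and> x (Suc i) \<le> y i
    then ext01 (f i) (y i - x i) * ext01 (g i) (y i - x (Suc i)) else 0)"
  using assms by (auto simp: saw_factor_def ext01_eq)

lemma sawtooth_modelD:
  assumes "sawtooth_model n f g" "i \<in> {1..n}"
  shows "mono_on {0..1} (f i)" "mono_on {0..1} (g i)" "\<forall>t\<in>{0..1}. f i t \<ge> 0 \<and> g i t \<ge> 0"
  using assms unfolding sawtooth_model_def by blast+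

lemma borel_measurable_prod_saw_factor:
  assumes sm: "sawtooth_model n f g" and S: "S \<subseteq> {1..n}"
    and X: "\<And>i. i \<in> S \<Longrightarrow> (\<lambda>a. X a i) \<in> measurable M unit_int"
      "\<And>i. i \<in> S \<Longrightarrow> (\<lambda>a. X a (Suc i)) \<in> measurable M unit_int"
    and Y: "\<And>i. i \<in> S \<Longrightarrow> (\<lambda>a. Y a i) \<in> measurable M unit_int"
  shows "(\<lambda>a. \<Prod>i\<in>S. saw_factor f g i (X a) (Y a)) \<in> borel_measurable M"
proof (rule borel_measurable_prod)
  fix i assume i: "i \<in> S"
  with S have "i \<in> {1..n}" by auto
  note mono = sawtooth_modelD(1,2)[OF sm this]
  note XY[measurable] = measurable_unit_int_imp_borel[OF X(1)[OF i]]
    measurable_unit_int_imp_borel[OF X(2)[OF i]] measurable_unit_int_imp_borel[OF Y[OF i]]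
  have [measurable]: "(\<lambda>a. ext01 (f i) (Y a i - X a i)) \<in> borel_measurable M"
      "(\<lambda>a. ext01 (g i) (Y a i - X a (Suc i))) \<in> borel_measurable M"
    by (intro measurable_compose[OF _ borel_measurable_ext01] mono borel_measurable_diff XY)+
  have "(\<lambda>a. if X a i \<le> Y a i \<and> X a (Suc i) \<le> Y a i
      then ext01 (f i) (Y a i - X a i) * ext01 (g i) (Y a i - X a (Suc i)) else 0) \<in> borel_measurable M"
    by measurable
  then show "(\<lambda>a. saw_factor f g i (X a) (Y a)) \<in> borel_measurable M"
  proof (rule measurable_cong[THEN iffD1, rotated])
    fix w assume w: "w \<in> space M"
    show "(if X w i \<le> Y w i \<and> X w (Suc i) \<le> Y w i
        then ext01 (f i) (Y w i - X w i) * ext01 (g i) (Y w i - X w (Suc i)) else 0)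
      = saw_factor f g i (X w) (Y w)"
      by (rule saw_factor_eq_ext01[symmetric]) (intro measurable_unit_int_range[OF _ w] X Y i)+
  qed
qed

lemma prod_saw_factor_nonneg:
  assumes sm: "sawtooth_model n f g" and S: "S \<subseteq> {1..n}"
    and X: "\<And>i. i \<in> S \<Longrightarrow> x i \<in> {0..1} \<and> x (Suc i) \<in> {0..1} \<and> y i \<in> {0..1}"
  shows "0 \<le> (\<Prod>i\<in>S. saw_factor f g i x y)"
proof (rule prod_nonneg)
  fix i assume i: "i \<in> S"
  with S have "i \<in> {1..n}" by auto
  then show "0 \<le> saw_factor f g i x y"
    using sawtooth_modelD(3)[OF sm] X[OF i] by (auto simp: saw_factor_def)
qed

lemma borel_measurable_saw_weight:
  assumes sm: "sawtooth_model n f g"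
    and X: "\<And>i. i \<in> {1..n+1} \<Longrightarrow> (\<lambda>a. X a i) \<in> measurable M unit_int"
    and Y: "\<And>i. i \<in> {1..n} \<Longrightarrow> (\<lambda>a. Y a i) \<in> measurable M unit_int"
  shows "(\<lambda>a. saw_weight n f g (X a) (Y a)) \<in> borel_measurable M"
  unfolding saw_weight_eq_prod by (rule borel_measurable_prod_saw_factor[OF sm order_refl]) (auto intro!: X Y)

lemma saw_weight_nonneg:
  assumes sm: "sawtooth_model n f g"
    and X: "\<And>i. i \<in> {1..n+1} \<Longrightarrow> x i \<in> {0..1}" and Y: "\<And>i. i \<in> {1..n} \<Longrightarrow> y i \<in> {0..1}"
  shows "0 \<le> saw_weight n f g x y"
  unfolding saw_weight_eq_prod by (rule prod_saw_factor_nonneg[OF sm order_refl]) (intro conjI X Y; auto)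

lemma sawtooth_first_factor:
  assumes sm: "sawtooth_model n f g"
  shows "mono (ext01 (f 1))" "mono (ext01 (g 1))" "\<And>t. 0 \<le> ext01 (f 1) t" "\<And>t. 0 \<le> ext01 (g 1) t"
proof -
  have "1 \<in> {1..n}" using sm by (simp add: sawtooth_model_def)
  note facts = sawtooth_modelD[OF sm this]
  show "mono (ext01 (f 1))" "mono (ext01 (g 1))" by (intro mono_ext01 facts)+
  show "0 \<le> ext01 (f 1) t" "0 \<le> ext01 (g 1) t" for t
    using ext01_in_image[of "f 1" t] ext01_in_image[of "g 1" t] facts(3) by auto
qed

lemma sawtooth_first_factor_le:
  assumes "\<forall>t\<in>{0..1}. \<bar>f 1 t\<bar> \<le> A"
  shows "ext01 (f 1) t \<le> A"
  using ext01_in_image[of "f 1" t] assms by (auto simp: abs_le_iff)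

lemma sawtooth_first_cell_le_total:
  assumes sm: "sawtooth_model n f g" and A: "A > 0"
    and mass: "(\<integral>t\<in>{0..1}. f 1 t \<partial>lborel) = 1" and bound: "\<forall>t\<in>{0..1}. \<bar>f 1 t\<bar> \<le> A"
    and x2: "0 \<le> x2"
  shows "cell_integral (ext01 (f 1)) (ext01 (g 1)) x2 x
    \<le> ennreal (4*A^2) * (\<integral>\<^sup>+ t. cell_integral (ext01 (f 1)) (ext01 (g 1)) x2 t * indicator {0..1} t \<partial>lborel)"
proof -
  have "1 \<in> {1..n}" using sm by (simp add: sawtooth_model_def)
  note facts = sawtooth_modelD[OF sm this]
  have "\<forall>t\<in>{0..1}. 0 \<le> f 1 t" using facts(3) by blast
  then have "(\<integral>\<^sup>+ s. ennreal (ext01 (f 1) s) * indicator {0..1} s \<partial>lborel) = 1"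
    using nn_integral_ext01[OF facts(1)] mass by simp
  then show ?thesis by (rule cell_integral_le_total[OF sawtooth_first_factor[OF sm] sawtooth_first_factor_le[of f A, OF bound] A _ x2])
qed

lemma saw_weight_update_Y1:
  assumes n: "1 \<le> n" and x: "x 1 \<in> {0..1}" "x 2 \<in> {0..1}" and y1: "y1 \<in> {0..1}"
  shows "saw_weight n f g x (r(1 := y1))
    = (if x 1 \<le> y1 \<and> x 2 \<le> y1 then ext01 (f 1) (y1 - x 1) * ext01 (g 1) (y1 - x 2) else 0)
      * (\<Prod>i\<in>{2..n}. saw_factor f g i x r)"
proof -
  have "saw_weight n f g x (r(1 := y1))
      = saw_factor f g 1 x (r(1 := y1)) * (\<Prod>i\<in>{2..n}. saw_factor f g i x (r(1 := y1)))"
    by (rule saw_weight_split_first[OF n])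
  also have "(\<Prod>i\<in>{2..n}. saw_factor f g i x (r(1 := y1))) = (\<Prod>i\<in>{2..n}. saw_factor f g i x r)"
    by (rule prod_saw_factor_cong) auto
  also have "saw_factor f g 1 x (r(1 := y1))
      = (if x 1 \<le> y1 \<and> x 2 \<le> y1 then ext01 (f 1) (y1 - x 1) * ext01 (g 1) (y1 - x 2) else 0)"
    using x y1 by (auto simp: saw_factor_def ext01_eq numeral_2_eq_2)
  finally show ?thesis .
qed

lemma nn_integral_saw_weight_over_Y1:
  assumes sm: "sawtooth_model n f g" and x: "x 1 \<in> {0..1}" "x 2 \<in> {0..1}"
  shows "(\<integral>\<^sup>+ y1. ennreal (saw_weight n f g x (r(1 := y1)) * c) \<partial>unit_int)
    = cell_integral (ext01 (f 1)) (ext01 (g 1)) (x 2) (x 1) * ennreal ((\<Prod>i\<in>{2..n}. saw_factor f g i x r) * c)"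
proof -
  define F where "F = ext01 (f 1)"
  define G where "G = ext01 (g 1)"
  have n: "1 \<le> n" using sm by (simp add: sawtooth_model_def)
  have [measurable]: "F \<in> borel_measurable borel" "G \<in> borel_measurable borel"
    unfolding F_def G_def using sawtooth_first_factor(1,2)[OF sm] by (auto intro: borel_measurable_mono)
  have "(\<integral>\<^sup>+ y1. ennreal (saw_weight n f g x (r(1 := y1)) * c) \<partial>unit_int)
      = (\<integral>\<^sup>+ y1. ennreal (if x 1 \<le> y1 \<and> x 2 \<le> y1 then F (y1 - x 1) * G (y1 - x 2) else 0)
          * ennreal ((\<Prod>i\<in>{2..n}. saw_factor f g i x r) * c) \<partial>unit_int)"
  proof (rule nn_integral_cong)
    fix y1 assume "y1 \<in> space unit_int"
    moreover have "0 \<le> (if x 1 \<le> y1 \<and> x 2 \<le> y1 then F (y1 - x 1) * G (y1 - x 2) else 0)"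
      using sawtooth_first_factor(3,4)[OF sm] by (simp add: F_def G_def)
    ultimately show "ennreal (saw_weight n f g x (r(1 := y1)) * c)
        = ennreal (if x 1 \<le> y1 \<and> x 2 \<le> y1 then F (y1 - x 1) * G (y1 - x 2) else 0)
          * ennreal ((\<Prod>i\<in>{2..n}. saw_factor f g i x r) * c)"
      using saw_weight_update_Y1[OF n x, of y1 f g r]
      by (simp add: F_def G_def ennreal_mult'[symmetric] mult.assoc)
  qed
  also have "\<dots> = (\<integral>\<^sup>+ y1. ennreal (if x 1 \<le> y1 \<and> x 2 \<le> y1 then F (y1 - x 1) * G (y1 - x 2) else 0)
      \<partial>unit_int) * ennreal ((\<Prod>i\<in>{2..n}. saw_factor f g i x r) * c)"
    by (rule nn_integral_multc) (rule measurable_compose[OF measurable_unit_int_borel], measurable)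
  also have "(\<integral>\<^sup>+ y1. ennreal (if x 1 \<le> y1 \<and> x 2 \<le> y1 then F (y1 - x 1) * G (y1 - x 2) else 0)
      \<partial>unit_int) = cell_integral F G (x 2) (x 1)"
    unfolding nn_integral_unit_int cell_integral_def ..
  finally show ?thesis unfolding F_def G_def .
qed

text \<open>The factor e lets the upper particles Y_2, ..., Y_n carry an indicator.\<close>
lemma nn_integral_saw_weight_over_Y:
  assumes sm: "sawtooth_model n f g"
    and xr: "\<And>i. i \<in> {1..n+1} \<Longrightarrow> x i \<in> {0..1}"
    and e: "e \<in> borel_measurable (PiM {2..n} (\<lambda>_. unit_int))" "\<And>r. 0 \<le> e r"
  shows "(\<integral>\<^sup>+ y. ennreal (saw_weight n f g x y * e (restrict y {2..n})) \<partial>PiM {1..n} (\<lambda>_. unit_int))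
    = cell_integral (ext01 (f 1)) (ext01 (g 1)) (x 2) (x 1)
      * (\<integral>\<^sup>+ r. ennreal ((\<Prod>i\<in>{2..n}. saw_factor f g i x r) * e r) \<partial>PiM {2..n} (\<lambda>_. unit_int))"
proof -
  interpret P: product_sigma_finite "\<lambda>_::nat. unit_int" by (rule product_sigma_finite_unit_int)
  have n: "1 \<le> n" using sm by (simp add: sawtooth_model_def)
  have ins: "{1..n} = insert 1 {2..n}" using n by auto
  have x12: "x 1 \<in> {0..1}" "x 2 \<in> {0..1}" using xr n by auto
  have xconst: "(\<lambda>a. x i) \<in> measurable M unit_int" if "i \<in> {1..n+1}" for i and M :: "(nat \<Rightarrow> real) measure"
    using xr[OF that] by (intro measurable_const) auto
  have "(\<lambda>y. saw_weight n f g x y) \<in> borel_measurable (PiM {1..n} (\<lambda>_. unit_int))"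
    by (rule borel_measurable_saw_weight[OF sm]) (auto intro!: xconst)
  moreover have "(\<lambda>y. e (restrict y {2..n})) \<in> borel_measurable (PiM {1..n} (\<lambda>_. unit_int))"
    by (rule measurable_compose[OF measurable_restrict_subset e(1)]) auto
  ultimately have "(\<integral>\<^sup>+ y. ennreal (saw_weight n f g x y * e (restrict y {2..n})) \<partial>PiM {1..n} (\<lambda>_. unit_int))
      = (\<integral>\<^sup>+ r. (\<integral>\<^sup>+ y1. ennreal (saw_weight n f g x (r(1 := y1)) * e (restrict (r(1 := y1)) {2..n}))
          \<partial>unit_int) \<partial>PiM {2..n} (\<lambda>_. unit_int))"
    unfolding ins by (intro P.product_nn_integral_insert) auto
  also have "\<dots> = (\<integral>\<^sup>+ r. cell_integral (ext01 (f 1)) (ext01 (g 1)) (x 2) (x 1)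
      * ennreal ((\<Prod>i\<in>{2..n}. saw_factor f g i x r) * e r) \<partial>PiM {2..n} (\<lambda>_. unit_int))"
  proof (rule nn_integral_cong)
    fix r assume "r \<in> space (PiM {2..n} (\<lambda>_::nat. unit_int))"
    then have "restrict (r(1 := y1)) {2..n} = r" for y1
      by (auto simp: space_PiM PiE_iff extensional_def restrict_def)
    then show "(\<integral>\<^sup>+ y1. ennreal (saw_weight n f g x (r(1 := y1)) * e (restrict (r(1 := y1)) {2..n})) \<partial>unit_int)
        = cell_integral (ext01 (f 1)) (ext01 (g 1)) (x 2) (x 1) * ennreal ((\<Prod>i\<in>{2..n}. saw_factor f g i x r) * e r)"
      using nn_integral_saw_weight_over_Y1[OF sm x12] by simp
  qed
  also have "\<dots> = cell_integral (ext01 (f 1)) (ext01 (g 1)) (x 2) (x 1)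
      * (\<integral>\<^sup>+ r. ennreal ((\<Prod>i\<in>{2..n}. saw_factor f g i x r) * e r) \<partial>PiM {2..n} (\<lambda>_. unit_int))"
  proof (rule nn_integral_cmult)
    have "(\<lambda>r. \<Prod>i\<in>{2..n}. saw_factor f g i x r) \<in> borel_measurable (PiM {2..n} (\<lambda>_. unit_int))"
      by (rule borel_measurable_prod_saw_factor[OF sm, where X="\<lambda>_. x" and Y="\<lambda>r. r"])
        (auto intro!: xconst)
    then show "(\<lambda>r. ennreal ((\<Prod>i\<in>{2..n}. saw_factor f g i x r) * e r))
        \<in> borel_measurable (PiM {2..n} (\<lambda>_. unit_int))"
      using e(1) by measurable
  qed
  finally show ?thesis .
qed

lemma enn2real_le_mult:
  assumes "a \<le> ennreal c * b" "b < \<top>" "0 \<le> c"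
  shows "enn2real a \<le> c * enn2real b"
proof -
  have "enn2real a \<le> enn2real (ennreal c * b)"
    using assms by (intro enn2real_mono) (auto simp: ennreal_mult_less_top)
  then show ?thesis using assms(3) by (simp add: enn2real_mult)
qed

lemma divide_le_of_le_mult:
  fixes a b c :: real
  assumes "a \<le> c * b" "0 \<le> b" "0 \<le> c"
  shows "a / b \<le> c"
  using assms by (cases "b = 0") (auto simp: divide_le_eq)

lemma set_integral_enn2real:
  fixes h :: "real \<Rightarrow> ennreal"
  assumes [measurable]: "h \<in> borel_measurable borel" "S \<in> sets borel" and finite: "\<And>t. h t < \<top>"
  shows "(\<integral>t\<in>S. enn2real (h t) \<partial>lborel) = enn2real (\<integral>\<^sup>+ t. h t * indicator S t \<partial>lborel)"
proof -
  have "(\<integral>t\<in>S. enn2real (h t) \<partial>lborel) = (\<integral>t. indicator S t * enn2real (h t) \<partial>lborel)"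
    unfolding set_lebesgue_integral_def by simp
  also have "\<dots> = enn2real (\<integral>\<^sup>+ t. ennreal (indicator S t * enn2real (h t)) \<partial>lborel)"
    by (rule integral_eq_nn_integral) auto
  also have "(\<integral>\<^sup>+ t. ennreal (indicator S t * enn2real (h t)) \<partial>lborel) = (\<integral>\<^sup>+ t. h t * indicator S t \<partial>lborel)"
    using finite by (intro nn_integral_cong) (auto simp: indicator_def ennreal_enn2real)
  finally show ?thesis .
qed

lemma measurable_fix_X1_X2:
  assumes "t \<in> {0..1}" "x2 \<in> {0..1}" "i \<in> {1..n+1}"
  shows "(\<lambda>a. if i = 1 then t else if i = 2 then x2 else fst a i)
    \<in> measurable (PiM {3..n+1} (\<lambda>_::nat. unit_int) \<Otimes>\<^sub>M M) unit_int"
proof (cases "i = 1 \<or> i = 2")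
  case False
  then have "i \<in> {3..n+1}" using assms by auto
  then show ?thesis
    using False by (auto intro!: measurable_compose[OF measurable_fst measurable_component_singleton])
qed (use assms in \<open>auto intro!: measurable_const\<close>)

lemma nn_integral_saw_weight_update_X1:
  assumes sm: "sawtooth_model n f g"
    and p: "\<And>i. i \<in> {2..n+1} \<Longrightarrow> p i \<in> {0..1}" and t: "t \<in> {0..1}"
  shows "(\<integral>\<^sup>+ y. ennreal (saw_weight n f g (p(1 := t)) y) \<partial>PiM {1..n} (\<lambda>_. unit_int))
    = cell_integral (ext01 (f 1)) (ext01 (g 1)) (p 2) t
      * (\<integral>\<^sup>+ r. ennreal (\<Prod>i\<in>{2..n}. saw_factor f g i p r) \<partial>PiM {2..n} (\<lambda>_. unit_int))"
proof -
  have "(p(1 := t)) i \<in> {0..1}" if "i \<in> {1..n+1}" for i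
    using p t that by (cases "i = 1") auto
  then have "(\<integral>\<^sup>+ y. ennreal (saw_weight n f g (p(1 := t)) y * 1) \<partial>PiM {1..n} (\<lambda>_. unit_int))
    = cell_integral (ext01 (f 1)) (ext01 (g 1)) ((p(1 := t)) 2) ((p(1 := t)) 1)
      * (\<integral>\<^sup>+ r. ennreal ((\<Prod>i\<in>{2..n}. saw_factor f g i (p(1 := t)) r) * 1) \<partial>PiM {2..n} (\<lambda>_. unit_int))"
    using nn_integral_saw_weight_over_Y[OF sm, of "p(1 := t)" "\<lambda>_. 1"] by simp
  moreover have "(\<Prod>i\<in>{2..n}. saw_factor f g i (p(1 := t)) r) = (\<Prod>i\<in>{2..n}. saw_factor f g i p r)" for r
    by (rule prod_saw_factor_cong) auto
  ultimately show ?thesis by simp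
qed

lemma marg_X1_X2_factorization:
  assumes sm: "sawtooth_model n f g" and x2: "x2 \<in> {0..1}"
  shows "\<exists>C\<ge>0. \<forall>t\<in>{0..1}.
    marg_X1_X2 n f g t x2 = enn2real (cell_integral (ext01 (f 1)) (ext01 (g 1)) x2 t) * C"
proof -
  let ?M3 = "PiM {3..n+1} (\<lambda>_::nat. unit_int)"
  let ?N = "PiM {1..n} (\<lambda>_::nat. unit_int)"
  let ?N2 = "PiM {2..n} (\<lambda>_::nat. unit_int)"
  interpret N: sigma_finite_measure ?N by (rule sigma_finite_PiM_unit_int)
  interpret N2: sigma_finite_measure ?N2 by (rule sigma_finite_PiM_unit_int)
  define X where "X = (\<lambda>p::nat\<Rightarrow>real. \<lambda>i. if i = 1 then 0 else if i = 2 then x2 else p i)"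
  define K where "K = (\<lambda>p. \<integral>\<^sup>+ r. ennreal (\<Prod>i\<in>{2..n}. saw_factor f g i (X p) r) \<partial>?N2)"
  have K_meas: "K \<in> borel_measurable ?M3"
  proof -
    have "(\<lambda>z. \<Prod>i\<in>{2..n}. saw_factor f g i (X (fst z)) (snd z)) \<in> borel_measurable (?M3 \<Otimes>\<^sub>M ?N2)"
      unfolding X_def using x2
      by (intro borel_measurable_prod_saw_factor[OF sm] measurable_fix_X1_X2
          measurable_compose[OF measurable_snd measurable_component_singleton]) auto
    then show ?thesis unfolding K_def split_beta' by (intro N2.borel_measurable_nn_integral) simp
  qed
  show ?thesis
  proof (intro exI conjI ballI)
    fix t :: real assume t: "t \<in> {0..1}"
    have X_upd: "(X p)(1 := t) = (\<lambda>i. if i = 1 then t else if i = 2 then x2 else p i)" for p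
      by (auto simp: X_def)
    have swm: "(\<lambda>z. saw_weight n f g ((X (fst z))(1 := t)) (snd z)) \<in> borel_measurable (?M3 \<Otimes>\<^sub>M ?N)"
      unfolding X_upd using t x2
      by (intro borel_measurable_saw_weight[OF sm] measurable_fix_X1_X2
          measurable_compose[OF measurable_snd measurable_component_singleton]) auto
    have "marg_X1_X2 n f g t x2 = (\<integral>z. saw_weight n f g ((X (fst z))(1 := t)) (snd z) \<partial>(?M3 \<Otimes>\<^sub>M ?N))"
      unfolding marg_X1_X2_def X_upd ..
    also have "\<dots> = enn2real (\<integral>\<^sup>+ z. ennreal (saw_weight n f g ((X (fst z))(1 := t)) (snd z)) \<partial>(?M3 \<Otimes>\<^sub>M ?N))"
      using t x2 by (intro integral_eq_nn_integral[OF swm] AE_I2 saw_weight_nonneg[OF sm])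
        (auto simp: X_def space_pair_measure space_PiM PiE_iff)
    also have "(\<integral>\<^sup>+ z. ennreal (saw_weight n f g ((X (fst z))(1 := t)) (snd z)) \<partial>(?M3 \<Otimes>\<^sub>M ?N))
        = (\<integral>\<^sup>+ p. \<integral>\<^sup>+ y. ennreal (saw_weight n f g ((X p)(1 := t)) y) \<partial>?N \<partial>?M3)"
      using N.nn_integral_fst[of "\<lambda>z. ennreal (saw_weight n f g ((X (fst z))(1 := t)) (snd z))" ?M3] swm
      by simp
    also have "\<dots> = (\<integral>\<^sup>+ p. cell_integral (ext01 (f 1)) (ext01 (g 1)) x2 t * K p \<partial>?M3)"
    proof (rule nn_integral_cong)
      fix p assume "p \<in> space ?M3"
      then have "X p i \<in> {0..1}" if "i \<in> {2..n+1}" for i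
        using x2 that by (auto simp: X_def space_PiM PiE_iff)
      from nn_integral_saw_weight_update_X1[OF sm this t]
      show "(\<integral>\<^sup>+ y. ennreal (saw_weight n f g ((X p)(1 := t)) y) \<partial>?N)
          = cell_integral (ext01 (f 1)) (ext01 (g 1)) x2 t * K p"
        by (simp add: K_def X_def)
    qed
    also have "\<dots> = cell_integral (ext01 (f 1)) (ext01 (g 1)) x2 t * (\<integral>\<^sup>+ p. K p \<partial>?M3)"
      by (rule nn_integral_cmult[OF K_meas])
    finally show "marg_X1_X2 n f g t x2
        = enn2real (cell_integral (ext01 (f 1)) (ext01 (g 1)) x2 t) * enn2real (\<integral>\<^sup>+ p. K p \<partial>?M3)"
      by (simp add: enn2real_mult)
  qed simp
qed

lemma cond_dens_X1_given_X2_le: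
  assumes sm: "sawtooth_model n f g" and A: "A > 0"
    and mass: "(\<integral>t\<in>{0..1}. f 1 t \<partial>lborel) = 1" and bound: "\<forall>t\<in>{0..1}. \<bar>f 1 t\<bar> \<le> A"
    and x2: "x2 \<in> {0..1}" and x: "x \<in> {0..1}"
  shows "cond_dens_X1_given_X2 n f g x2 x \<le> 4 * A\<^sup>2"
proof -
  define \<Phi> where "\<Phi> = cell_integral (ext01 (f 1)) (ext01 (g 1)) x2"
  define J where "J = (\<integral>\<^sup>+ t. \<Phi> t * indicator {0..1} t \<partial>lborel)"
  obtain C where C: "0 \<le> C" "\<And>t. t \<in> {0..1} \<Longrightarrow> marg_X1_X2 n f g t x2 = enn2real (\<Phi> t) * C"
    using marg_X1_X2_factorization[OF sm x2] unfolding \<Phi>_def by blast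
  have \<Phi>_le: "\<Phi> t \<le> ennreal (A * ext01 (g 1) 1)" for t
    unfolding \<Phi>_def using A x2
    by (intro cell_integral_le sawtooth_first_factor[OF sm] sawtooth_first_factor_le[of f A, OF bound]) auto
  then have \<Phi>_finite: "\<Phi> t < \<top>" for t
    using ennreal_less_top le_less_trans by blast
  have "J \<le> (\<integral>\<^sup>+ t. ennreal (A * ext01 (g 1) 1) * indicator {0..1::real} t \<partial>lborel)"
    unfolding J_def using \<Phi>_le by (intro nn_integral_mono) (auto simp: indicator_def)
  also have "\<dots> = ennreal (A * ext01 (g 1) 1)" by (simp add: nn_integral_cmult_indicator)
  finally have J_finite: "J < \<top>"
    using ennreal_less_top le_less_trans by blast
  have [measurable]: "\<Phi> \<in> borel_measurable borel"
    unfolding \<Phi>_def using sawtooth_first_factor(1,2)[OF sm] by (intro borel_measurable_cell_integral borel_measurable_mono)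
  have "(\<integral>t\<in>{0..1}. marg_X1_X2 n f g t x2 \<partial>lborel) = (\<integral>t\<in>{0..1}. enn2real (\<Phi> t) * C \<partial>lborel)"
    by (rule set_lebesgue_integral_cong) (auto simp: C(2))
  also have "\<dots> = (\<integral>t\<in>{0..1}. enn2real (\<Phi> t) \<partial>lborel) * C" by simp
  also have "\<dots> = enn2real J * C" unfolding J_def by (subst set_integral_enn2real[OF _ _ \<Phi>_finite]) auto
  finally have den: "(\<integral>t\<in>{0..1}. marg_X1_X2 n f g t x2 \<partial>lborel) = enn2real J * C" .
  have "enn2real (\<Phi> x) \<le> 4 * A\<^sup>2 * enn2real J"
    unfolding J_def \<Phi>_def using x2 J_finite[unfolded J_def \<Phi>_def]
    by (intro enn2real_le_mult sawtooth_first_cell_le_total[OF sm A mass bound]) auto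
  then have "enn2real (\<Phi> x) * C \<le> 4 * A\<^sup>2 * enn2real J * C"
    using C(1) by (rule mult_right_mono)
  then show ?thesis
    unfolding cond_dens_X1_given_X2_def den C(2)[OF x] using C(1)
    by (intro divide_le_of_le_mult) (auto simp: mult.assoc)
qed

lemma nn_integral_pair_PiM_insert:
  fixes h :: "(nat \<Rightarrow> real) \<times> 'b \<Rightarrow> ennreal"
  assumes N: "sigma_finite_measure N" and I: "finite I" "i \<notin> I"
    and h: "h \<in> borel_measurable (PiM (insert i I) (\<lambda>_. unit_int) \<Otimes>\<^sub>M N)"
  shows "(\<integral>\<^sup>+ z. h z \<partial>(PiM (insert i I) (\<lambda>_. unit_int) \<Otimes>\<^sub>M N))
      = (\<integral>\<^sup>+ p. \<integral>\<^sup>+ t. \<integral>\<^sup>+ y. h (p(i := t), y) \<partial>N \<partial>unit_int \<partial>PiM I (\<lambda>_. unit_int))"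
    and "(\<lambda>p. \<integral>\<^sup>+ t. \<integral>\<^sup>+ y. h (p(i := t), y) \<partial>N \<partial>unit_int) \<in> borel_measurable (PiM I (\<lambda>_. unit_int))"
proof -
  interpret P: product_sigma_finite "\<lambda>_::nat. unit_int" by (rule product_sigma_finite_unit_int)
  interpret N: sigma_finite_measure N by (rule N)
  have "(\<lambda>(q, y). h (q, y)) \<in> borel_measurable (PiM (insert i I) (\<lambda>_. unit_int) \<Otimes>\<^sub>M N)"
    using h by simp
  then have inner: "(\<lambda>q. \<integral>\<^sup>+ y. h (q, y) \<partial>N) \<in> borel_measurable (PiM (insert i I) (\<lambda>_. unit_int))"
    by (rule N.borel_measurable_nn_integral)
  have "(\<integral>\<^sup>+ z. h z \<partial>(PiM (insert i I) (\<lambda>_. unit_int) \<Otimes>\<^sub>M N))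
      = (\<integral>\<^sup>+ q. \<integral>\<^sup>+ y. h (q, y) \<partial>N \<partial>PiM (insert i I) (\<lambda>_. unit_int))"
    using N.nn_integral_fst[OF h] by simp
  also have "\<dots> = (\<integral>\<^sup>+ p. \<integral>\<^sup>+ t. \<integral>\<^sup>+ y. h (p(i := t), y) \<partial>N \<partial>unit_int \<partial>PiM I (\<lambda>_. unit_int))"
    by (rule P.product_nn_integral_insert[OF I inner])
  finally show "(\<integral>\<^sup>+ z. h z \<partial>(PiM (insert i I) (\<lambda>_. unit_int) \<Otimes>\<^sub>M N))
      = (\<integral>\<^sup>+ p. \<integral>\<^sup>+ t. \<integral>\<^sup>+ y. h (p(i := t), y) \<partial>N \<partial>unit_int \<partial>PiM I (\<lambda>_. unit_int))" .
  have "(\<lambda>((p, t), y). h (p(i := t), y)) \<in> borel_measurable ((PiM I (\<lambda>_. unit_int) \<Otimes>\<^sub>M unit_int) \<Otimes>\<^sub>M N)"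
  proof -
    have "(\<lambda>w. ((fst (fst w))(i := snd (fst w)), snd w)) \<in> measurable ((PiM I (\<lambda>_. unit_int) \<Otimes>\<^sub>M unit_int) \<Otimes>\<^sub>M N)
        (PiM (insert i I) (\<lambda>_. unit_int) \<Otimes>\<^sub>M N)"
      by (intro measurable_Pair measurable_fun_upd[where J=I]) auto
    from measurable_compose[OF this h] show ?thesis by (simp add: split_beta')
  qed
  then have "(\<lambda>(p, t). \<integral>\<^sup>+ y. h (p(i := t), y) \<partial>N) \<in> borel_measurable (PiM I (\<lambda>_. unit_int) \<Otimes>\<^sub>M unit_int)"
    by (simp add: split_beta' N.borel_measurable_nn_integral[where f="\<lambda>v y. h ((fst v)(i := snd v), y)", simplified split_beta'])
  then show "(\<lambda>p. \<integral>\<^sup>+ t. \<integral>\<^sup>+ y. h (p(i := t), y) \<partial>N \<partial>unit_int) \<in> borel_measurable (PiM I (\<lambda>_. unit_int))"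
    by (rule sigma_finite_measure.borel_measurable_nn_integral[OF sigma_finite_unit_int])
qed

text \<open>For the event E = {(x, y). (x|{2..n+1}, y|{2..n}) \<in> B}, the integrand of both integrals
  in cond_dens_X1_given_event.\<close>
definition tail_weight :: "nat \<Rightarrow> (nat \<Rightarrow> real \<Rightarrow> real) \<Rightarrow> (nat \<Rightarrow> real \<Rightarrow> real)
    \<Rightarrow> ((nat \<Rightarrow> real) \<times> (nat \<Rightarrow> real)) set \<Rightarrow> (nat \<Rightarrow> real) \<Rightarrow> (nat \<Rightarrow> real) \<Rightarrow> real" where
  "tail_weight n f g B x y = saw_weight n f g x y * indicator B (restrict x {2..n+1}, restrict y {2..n})"

definition tail_rest :: "nat \<Rightarrow> (nat \<Rightarrow> real \<Rightarrow> real) \<Rightarrow> (nat \<Rightarrow> real \<Rightarrow> real)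
    \<Rightarrow> ((nat \<Rightarrow> real) \<times> (nat \<Rightarrow> real)) set \<Rightarrow> (nat \<Rightarrow> real) \<Rightarrow> ennreal" where
  "tail_rest n f g B x = (\<integral>\<^sup>+ r. ennreal ((\<Prod>i\<in>{2..n}. saw_factor f g i x r) * indicator B (restrict x {2..n+1}, r))
      \<partial>PiM {2..n} (\<lambda>_. unit_int))"

lemma borel_measurable_tail_weight:
  assumes sm: "sawtooth_model n f g"
    and B: "B \<in> sets (PiM {2..n+1} (\<lambda>_. unit_int) \<Otimes>\<^sub>M PiM {2..n} (\<lambda>_. unit_int))"
  shows "(\<lambda>z. tail_weight n f g B (fst z) (snd z))
    \<in> borel_measurable (PiM {1..n+1} (\<lambda>_. unit_int) \<Otimes>\<^sub>M PiM {1..n} (\<lambda>_. unit_int))"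
proof -
  let ?P1 = "PiM {1..n+1} (\<lambda>_::nat. unit_int)"
  let ?N = "PiM {1..n} (\<lambda>_::nat. unit_int)"
  have "(\<lambda>z. saw_weight n f g (fst z) (snd z)) \<in> borel_measurable (?P1 \<Otimes>\<^sub>M ?N)"
    by (rule borel_measurable_saw_weight[OF sm])
      (auto intro!: measurable_compose[OF measurable_fst measurable_component_singleton]
        measurable_compose[OF measurable_snd measurable_component_singleton])
  moreover have "(\<lambda>z. (restrict (fst z) {2..n+1}, restrict (snd z) {2..n}))
      \<in> measurable (?P1 \<Otimes>\<^sub>M ?N) (PiM {2..n+1} (\<lambda>_. unit_int) \<Otimes>\<^sub>M PiM {2..n} (\<lambda>_. unit_int))"
    by (intro measurable_Pair measurable_compose[OF measurable_fst measurable_restrict_subset]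
        measurable_compose[OF measurable_snd measurable_restrict_subset]) auto
  then have "(\<lambda>z. indicator B (restrict (fst z) {2..n+1}, restrict (snd z) {2..n}) :: real)
      \<in> borel_measurable (?P1 \<Otimes>\<^sub>M ?N)"
    by (rule measurable_compose[OF _ borel_measurable_indicator[OF B]])
  ultimately show ?thesis unfolding tail_weight_def by measurable
qed

lemma nn_integral_tail_weight_over_Y:
  assumes sm: "sawtooth_model n f g"
    and B: "B \<in> sets (PiM {2..n+1} (\<lambda>_. unit_int) \<Otimes>\<^sub>M PiM {2..n} (\<lambda>_. unit_int))"
    and p: "p \<in> space (PiM {2..n+1} (\<lambda>_. unit_int))" and t: "t \<in> {0..1}"
  shows "(\<integral>\<^sup>+ y. ennreal (tail_weight n f g B (p(1 := t)) y) \<partial>PiM {1..n} (\<lambda>_. unit_int))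
    = cell_integral (ext01 (f 1)) (ext01 (g 1)) (p 2) t * tail_rest n f g B p"
proof -
  have "restrict p {2..n+1} \<in> space (PiM {2..n+1} (\<lambda>_. unit_int))"
    using p by (simp add: space_PiM PiE_restrict)
  then have "(\<lambda>r. indicator B (restrict p {2..n+1}, r) :: real) \<in> borel_measurable (PiM {2..n} (\<lambda>_. unit_int))"
    by (rule measurable_compose[OF measurable_Pair1' borel_measurable_indicator[OF B]])
  moreover have "(p(1 := t)) i \<in> {0..1}" if "i \<in> {1..n+1}" for i
    using p t that by (auto simp: space_PiM PiE_iff)
  ultimately have "(\<integral>\<^sup>+ y. ennreal (saw_weight n f g (p(1 := t)) y * indicator B (restrict p {2..n+1}, restrict y {2..n}))
      \<partial>PiM {1..n} (\<lambda>_. unit_int))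
    = cell_integral (ext01 (f 1)) (ext01 (g 1)) ((p(1 := t)) 2) ((p(1 := t)) 1)
      * (\<integral>\<^sup>+ r. ennreal ((\<Prod>i\<in>{2..n}. saw_factor f g i (p(1 := t)) r) * indicator B (restrict p {2..n+1}, r))
          \<partial>PiM {2..n} (\<lambda>_. unit_int))"
    by (intro nn_integral_saw_weight_over_Y[OF sm]) auto
  moreover have "(\<Prod>i\<in>{2..n}. saw_factor f g i (p(1 := t)) r) = (\<Prod>i\<in>{2..n}. saw_factor f g i p r)" for r
    by (rule prod_saw_factor_cong) auto
  ultimately show ?thesis by (simp add: tail_weight_def tail_rest_def)
qed

text \<open>Fibrewise over (X_2, ..., X_{n+1}) the numerator is the cell integral at X_1 = x and the
  denominator its integral over X_1, both times the same factor tail_rest.\<close>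
lemma tail_numerator_le:
  assumes sm: "sawtooth_model n f g" and A: "A > 0"
    and mass: "(\<integral>t\<in>{0..1}. f 1 t \<partial>lborel) = 1" and bound: "\<forall>t\<in>{0..1}. \<bar>f 1 t\<bar> \<le> A"
    and B: "B \<in> sets (PiM {2..n+1} (\<lambda>_. unit_int) \<Otimes>\<^sub>M PiM {2..n} (\<lambda>_. unit_int))" and x: "x \<in> {0..1}"
  shows "(\<integral>\<^sup>+ z. ennreal (tail_weight n f g B ((fst z)(1 := x)) (snd z))
      \<partial>(PiM {2..n+1} (\<lambda>_. unit_int) \<Otimes>\<^sub>M PiM {1..n} (\<lambda>_. unit_int)))
    \<le> ennreal (4*A^2) * (\<integral>\<^sup>+ z. ennreal (tail_weight n f g B (fst z) (snd z))
      \<partial>(PiM {1..n+1} (\<lambda>_. unit_int) \<Otimes>\<^sub>M PiM {1..n} (\<lambda>_. unit_int)))"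
proof -
  let ?P2 = "PiM {2..n+1} (\<lambda>_::nat. unit_int)"
  let ?N = "PiM {1..n} (\<lambda>_::nat. unit_int)"
  define H where "H = (\<lambda>z. ennreal (tail_weight n f g B (fst z) (snd z)))"
  define \<Phi> where "\<Phi> = cell_integral (ext01 (f 1)) (ext01 (g 1))"
  interpret N: sigma_finite_measure ?N by (rule sigma_finite_PiM_unit_int)
  have ins: "{1..n+1} = insert 1 {2..n+1}" by auto
  have H[measurable]: "H \<in> borel_measurable (PiM (insert 1 {2..n+1}) (\<lambda>_. unit_int) \<Otimes>\<^sub>M ?N)"
    unfolding H_def ins[symmetric] using borel_measurable_tail_weight[OF sm B] by measurable
  note split_X1 = nn_integral_pair_PiM_insert[OF sigma_finite_PiM_unit_int _ _ H]
  have "(\<lambda>z. ((fst z)(1 := x), snd z)) \<in> measurable (?P2 \<Otimes>\<^sub>M ?N) (PiM (insert 1 {2..n+1}) (\<lambda>_. unit_int) \<Otimes>\<^sub>M ?N)"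
    using x by (intro measurable_Pair measurable_fun_upd[where J="{2..n+1}"]) auto
  then have H_upd: "(\<lambda>z. H ((fst z)(1 := x), snd z)) \<in> borel_measurable (?P2 \<Otimes>\<^sub>M ?N)"
    by (rule measurable_compose[OF _ H])
  have "(\<integral>\<^sup>+ z. H ((fst z)(1 := x), snd z) \<partial>(?P2 \<Otimes>\<^sub>M ?N)) = (\<integral>\<^sup>+ p. \<integral>\<^sup>+ y. H (p(1 := x), y) \<partial>?N \<partial>?P2)"
    using N.nn_integral_fst[OF H_upd] by simp
  also have "\<dots> \<le> (\<integral>\<^sup>+ p. ennreal (4*A^2) * (\<integral>\<^sup>+ t. \<integral>\<^sup>+ y. H (p(1 := t), y) \<partial>?N \<partial>unit_int) \<partial>?P2)"
  proof (rule nn_integral_mono)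
    fix p assume p: "p \<in> space ?P2"
    then have p2: "0 \<le> p 2" using sm by (auto simp: space_PiM PiE_iff sawtooth_model_def)
    have \<Phi>_meas: "\<Phi> (p 2) \<in> borel_measurable unit_int"
      unfolding \<Phi>_def using sawtooth_first_factor(1,2)[OF sm]
      by (intro measurable_compose[OF measurable_unit_int_borel] borel_measurable_cell_integral borel_measurable_mono)
    have "(\<integral>\<^sup>+ y. H (p(1 := x), y) \<partial>?N) = \<Phi> (p 2) x * tail_rest n f g B p"
      unfolding H_def \<Phi>_def using nn_integral_tail_weight_over_Y[OF sm B p x] by simp
    also have "\<dots> \<le> ennreal (4*A^2) * (\<integral>\<^sup>+ t. \<Phi> (p 2) t \<partial>unit_int) * tail_rest n f g B p"
      unfolding \<Phi>_def nn_integral_unit_int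
      by (intro mult_right_mono sawtooth_first_cell_le_total[OF sm A mass bound p2]) auto
    also have "\<dots> = ennreal (4*A^2) * ((\<integral>\<^sup>+ t. \<Phi> (p 2) t \<partial>unit_int) * tail_rest n f g B p)"
      by (rule mult.assoc)
    also have "(\<integral>\<^sup>+ t. \<Phi> (p 2) t \<partial>unit_int) * tail_rest n f g B p
        = (\<integral>\<^sup>+ t. \<Phi> (p 2) t * tail_rest n f g B p \<partial>unit_int)"
      by (rule nn_integral_multc[symmetric, OF \<Phi>_meas])
    also have "\<dots> = (\<integral>\<^sup>+ t. \<integral>\<^sup>+ y. H (p(1 := t), y) \<partial>?N \<partial>unit_int)"
      unfolding H_def \<Phi>_def using nn_integral_tail_weight_over_Y[OF sm B p]
      by (intro nn_integral_cong) simp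
    finally show "(\<integral>\<^sup>+ y. H (p(1 := x), y) \<partial>?N)
        \<le> ennreal (4*A^2) * (\<integral>\<^sup>+ t. \<integral>\<^sup>+ y. H (p(1 := t), y) \<partial>?N \<partial>unit_int)" .
  qed
  also have "\<dots> = ennreal (4*A^2) * (\<integral>\<^sup>+ z. H z \<partial>(PiM (insert 1 {2..n+1}) (\<lambda>_. unit_int) \<Otimes>\<^sub>M ?N))"
    using split_X1 by (simp add: nn_integral_cmult)
  finally show ?thesis unfolding H_def ins by simp
qed

lemma tail_weight_nonneg:
  assumes sm: "sawtooth_model n f g"
    and "(q, y) \<in> space (PiM {1..n+1} (\<lambda>_. unit_int) \<Otimes>\<^sub>M PiM {1..n} (\<lambda>_. unit_int))"
  shows "0 \<le> tail_weight n f g B q y"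
  using assms(2) unfolding tail_weight_def
  by (intro mult_nonneg_nonneg saw_weight_nonneg[OF sm]) (auto simp: space_pair_measure space_PiM PiE_iff)

lemma cond_dens_X1_given_event_eq:
  assumes sm: "sawtooth_model n f g"
    and B: "B \<in> sets (PiM {2..n+1} (\<lambda>_. unit_int) \<Otimes>\<^sub>M PiM {2..n} (\<lambda>_. unit_int))"
    and EB: "E = {z \<in> space (saw_base n). (restrict (fst z) {2..n+1}, restrict (snd z) {2..n}) \<in> B}"
    and x: "x \<in> {0..1}"
  shows "cond_dens_X1_given_event n f g E x
    = enn2real (\<integral>\<^sup>+ z. ennreal (tail_weight n f g B ((fst z)(1 := x)) (snd z))
        \<partial>(PiM {2..n+1} (\<lambda>_. unit_int) \<Otimes>\<^sub>M PiM {1..n} (\<lambda>_. unit_int)))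
      / enn2real (\<integral>\<^sup>+ z. ennreal (tail_weight n f g B (fst z) (snd z))
        \<partial>(PiM {1..n+1} (\<lambda>_. unit_int) \<Otimes>\<^sub>M PiM {1..n} (\<lambda>_. unit_int)))"
proof -
  let ?P1 = "PiM {1..n+1} (\<lambda>_::nat. unit_int)"
  let ?P2 = "PiM {2..n+1} (\<lambda>_::nat. unit_int)"
  let ?N = "PiM {1..n} (\<lambda>_::nat. unit_int)"
  have weight_eq: "saw_weight n f g (fst z) (snd z) * indicator E z = tail_weight n f g B (fst z) (snd z)"
    if "z \<in> space (?P1 \<Otimes>\<^sub>M ?N)" for z
    using that by (simp add: EB tail_weight_def saw_base_def indicator_def)
  have upd: "(\<lambda>z. ((fst z)(1 := x), snd z)) \<in> measurable (?P2 \<Otimes>\<^sub>M ?N) (?P1 \<Otimes>\<^sub>M ?N)"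
    using x by (intro measurable_Pair measurable_fun_upd[where J="{2..n+1}"]) auto
  have "(\<integral>z. saw_weight n f g ((fst z)(1 := x)) (snd z) * indicator E ((fst z)(1 := x), snd z) \<partial>(?P2 \<Otimes>\<^sub>M ?N))
      = (\<integral>z. tail_weight n f g B ((fst z)(1 := x)) (snd z) \<partial>(?P2 \<Otimes>\<^sub>M ?N))"
    using weight_eq measurable_space[OF upd] by (intro Bochner_Integration.integral_cong) auto
  also have "\<dots> = enn2real (\<integral>\<^sup>+ z. ennreal (tail_weight n f g B ((fst z)(1 := x)) (snd z)) \<partial>(?P2 \<Otimes>\<^sub>M ?N))"
  proof (rule integral_eq_nn_integral)
    show "(\<lambda>z. tail_weight n f g B ((fst z)(1 := x)) (snd z)) \<in> borel_measurable (?P2 \<Otimes>\<^sub>M ?N)"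
      using measurable_compose[OF upd borel_measurable_tail_weight[OF sm B]] by simp
    show "AE z in ?P2 \<Otimes>\<^sub>M ?N. 0 \<le> tail_weight n f g B ((fst z)(1 := x)) (snd z)"
      using measurable_space[OF upd] by (intro AE_I2 tail_weight_nonneg[OF sm]) simp
  qed
  moreover have "(\<integral>z. saw_weight n f g (fst z) (snd z) * indicator E z \<partial>saw_base n)
      = (\<integral>z. tail_weight n f g B (fst z) (snd z) \<partial>(?P1 \<Otimes>\<^sub>M ?N))"
    unfolding saw_base_def using weight_eq by (intro Bochner_Integration.integral_cong) auto
  moreover have "\<dots> = enn2real (\<integral>\<^sup>+ z. ennreal (tail_weight n f g B (fst z) (snd z)) \<partial>(?P1 \<Otimes>\<^sub>M ?N))"
    by (intro integral_eq_nn_integral AE_I2 borel_measurable_tail_weight[OF sm B] tail_weight_nonneg[OF sm])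
      simp
  ultimately show ?thesis unfolding cond_dens_X1_given_event_def by simp
qed

lemma cond_dens_X1_given_event_le:
  assumes sm: "sawtooth_model n f g" and A: "A > 0"
    and mass: "(\<integral>t\<in>{0..1}. f 1 t \<partial>lborel) = 1" and bound: "\<forall>t\<in>{0..1}. \<bar>f 1 t\<bar> \<le> A"
    and E: "tail_event n E" and x: "x \<in> {0..1}"
  shows "\<bar>cond_dens_X1_given_event n f g E x\<bar> \<le> 4 * A\<^sup>2"
proof -
  obtain B where B: "B \<in> sets (PiM {2..n+1} (\<lambda>_. unit_int) \<Otimes>\<^sub>M PiM {2..n} (\<lambda>_. unit_int))"
    and EB: "E = {z \<in> space (saw_base n). (restrict (fst z) {2..n+1}, restrict (snd z) {2..n}) \<in> B}"
    using E unfolding tail_event_def by blast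
  define Num where "Num = (\<integral>\<^sup>+ z. ennreal (tail_weight n f g B ((fst z)(1 := x)) (snd z))
    \<partial>(PiM {2..n+1} (\<lambda>_. unit_int) \<Otimes>\<^sub>M PiM {1..n} (\<lambda>_. unit_int)))"
  define Den where "Den = (\<integral>\<^sup>+ z. ennreal (tail_weight n f g B (fst z) (snd z))
    \<partial>(PiM {1..n+1} (\<lambda>_. unit_int) \<Otimes>\<^sub>M PiM {1..n} (\<lambda>_. unit_int)))"
  have "enn2real Num / enn2real Den \<le> 4 * A\<^sup>2"
  proof (cases "Den = \<top>")
    case False
    then have "enn2real Num \<le> 4 * A\<^sup>2 * enn2real Den"
      unfolding Num_def Den_def
      by (intro enn2real_le_mult tail_numerator_le[OF sm A mass bound B x]) (auto simp: top.not_eq_extremum)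
    then show ?thesis by (intro divide_le_of_le_mult) auto
  qed simp
  then show ?thesis
    unfolding cond_dens_X1_given_event_eq[OF sm B EB x] Num_def[symmetric] Den_def[symmetric] by simp
qed

theorem mainTheorem10:
  fixes n :: nat and f g :: "nat \<Rightarrow> real \<Rightarrow> real" and A :: real
  assumes "sawtooth_model n f g"
    and "A > 0"
    and "(\<integral>t\<in>{0..1}. f 1 t \<partial>lborel) = 1"
    and "\<forall>t\<in>{0..1}. \<bar>f 1 t\<bar> \<le> A"
  shows "(\<forall>x2\<in>{0..<1}. \<forall>x\<in>{0..1}. cond_dens_X1_given_X2 n f g x2 x \<le> 4 * A\<^sup>2)
       \<and> (\<forall>E. tail_event n E \<longrightarrow> measure (saw_prob n f g) E > 0 \<longrightarrow>
            (AE x in lborel. x \<in> {0..1} \<longrightarrow> \<bar>cond_dens_X1_given_event n f g E x\<bar> \<le> 4 * A\<^sup>2))"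
  using cond_dens_X1_given_X2_le[OF assms] cond_dens_X1_given_event_le[OF assms]
  by (auto intro!: AE_I2)

end
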